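(* Let $f\in C^\infty(\mathbb{R}^2)$ be a real-valued function whose zero set $\{x\in\mathbb{R}^2: f(x)=0\}$ is exactly the Hawaiian earring \[ \mathcal H=\bigcup_{k=1}^{\infty}\left\{(x,y)\in\mathbb{R}^2:\left(x-\tfrac1k\right)^2+y^2=\tfrac1{k^2}\right\}. \] Then $f$ is flat at the origin (all partial derivatives of all orders of $f$ vanish at $0$), and $f$ does not satisfy a Łojasiewicz inequality with respect to $\mathcal H$ at $0$: there exist no constants $C>0$ and $\theta>0$ such that \[ |f(x)|\ge C\,\mathrm{dist}(x,\mathcal H)^\theta \] for all $x$ in a neighborhood of $0$.
   Context: $\mathrm{dist}(x,\mathcal H)$ denotes the Euclidean distance from $x$ to the set $\mathcal H$. *)

theory Defs
  imports "HOL-Analysis.Analysis"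
begin

definition hawaiian_earring :: "(real \<times> real) set" where
  "hawaiian_earring = (\<Union>k\<in>{1::nat..}. {(x, y). (x - 1 / real k)\<^sup>2 + y\<^sup>2 = 1 / (real k)\<^sup>2})"

definition partial_dir :: "(real \<times> real) \<Rightarrow> ((real \<times> real) \<Rightarrow> real) \<Rightarrow> (real \<times> real) \<Rightarrow> real" where
  "partial_dir v g x = deriv (\<lambda>t. g (x + t *\<^sub>R v)) 0"

text \<open>Iterated partial derivative: the head of the list is applied last.\<close>
fun iter_partial :: "(real \<times> real) list \<Rightarrow> ((real \<times> real) \<Rightarrow> real) \<Rightarrow> (real \<times> real) \<Rightarrow> real" where
  "iter_partial [] g = g"
| "iter_partial (v # vs) g = partial_dir v (iter_partial vs g)"

definition smooth_R2 :: "((real \<times> real) \<Rightarrow> real) \<Rightarrow> bool" where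
  "smooth_R2 g \<longleftrightarrow> (\<forall>vs. set vs \<subseteq> Basis \<longrightarrow>
      continuous_on UNIV (iter_partial vs g) \<and>
      (\<forall>v\<in>Basis. \<forall>x. (\<lambda>t. iter_partial vs g (x + t *\<^sub>R v)) differentiable (at 0)))"

definition flat_at :: "((real \<times> real) \<Rightarrow> real) \<Rightarrow> (real \<times> real) \<Rightarrow> bool" where
  "flat_at g a \<longleftrightarrow> (\<forall>vs. set vs \<subseteq> Basis \<longrightarrow> iter_partial vs g a = 0)"

end

theory Submission
  imports Defs
begin

(* Each horizontal line y = c with 0 < |c| < 1/(N+1) meets the first N+1 circles of the earring
   in N+1 distinct points of [0, |c|]; by Rolle's theorem, applied N times, |f(x, c)| is bounded
   by sup |d^N f / dx^N| (2 |p|)^N near 0, and by continuity f = O(|p|^N) for every N.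
   A derivative of a function which is O(|p|^(2n)) and has bounded second derivative is O(|p|^n)
   (compare with a difference quotient of step |p|^n), so all partial derivatives of f vanish
   to infinite order at 0 and f is flat.
   The points (1/k + 1/(k+1), 0) lie midway between two consecutive circles, at distance at least
   1/(k (k+1)) >= |p|^2/8 from the earring, whereas |f p| = O(|p|^N) with N > 2 theta;
   this rules out |f| >= C dist^theta near 0. *)

lemma Rolle_card_zeros:
  fixes \<phi> \<phi>' :: "real \<Rightarrow> real"
  assumes der: "\<And>t. (\<phi> has_real_derivative \<phi>' t) (at t)"
    and "finite Z" "card Z = Suc n" "\<forall>z\<in>Z. \<phi> z = 0"
  shows "\<exists>Z'. finite Z' \<and> card Z' = n \<and> Z' \<subseteq> {Min Z..Max Z} \<and> (\<forall>z\<in>Z'. \<phi>' z = 0)"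
  using assms(2-4)
proof (induction n arbitrary: Z)
  case 0
  then show ?case by (intro exI[of _ "{}"]) auto
next
  case (Suc n)
  define a where "a = Max Z"
  define Z0 where "Z0 = Z - {a}"
  have "Z \<noteq> {}" using Suc.prems by auto
  then have aZ: "a \<in> Z" using Suc.prems unfolding a_def by simp
  have fin0: "finite Z0" and card0: "card Z0 = Suc n" and "Z0 \<subseteq> Z"
    using Suc.prems aZ unfolding Z0_def by auto
  then have "Z0 \<noteq> {}" by auto
  obtain Z0' where Z0': "finite Z0'" "card Z0' = n" "Z0' \<subseteq> {Min Z0..Max Z0}" "\<forall>z\<in>Z0'. \<phi>' z = 0"
    using Suc.IH[OF fin0 card0] Suc.prems(3) \<open>Z0 \<subseteq> Z\<close> by blast
  define b where "b = Max Z0"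
  have "b \<in> Z0" using fin0 \<open>Z0 \<noteq> {}\<close> unfolding b_def by simp
  then have "b < a" "b \<in> Z"
    using Suc.prems(1) unfolding Z0_def a_def by (auto simp: order.not_eq_order_implies_strict)
  obtain \<xi> where \<xi>: "b < \<xi>" "\<xi> < a" "\<phi> a - \<phi> b = (a - b) * \<phi>' \<xi>"
    using MVT2[OF \<open>b < a\<close>, of \<phi> \<phi>'] der by blast
  have "\<phi>' \<xi> = 0" using \<xi> Suc.prems(3) aZ \<open>b \<in> Z\<close> by simp
  moreover have "\<xi> \<notin> Z0'" using Z0'(3) \<xi>(1) unfolding b_def by auto
  moreover have "Min Z \<le> Min Z0" "Max Z0 \<le> Max Z"
    using Suc.prems(1) \<open>Z0 \<noteq> {}\<close> \<open>Z0 \<subseteq> Z\<close> by (simp_all add: Min_antimono Max_mono)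
  moreover have "Min Z \<le> b" using Suc.prems(1) \<open>b \<in> Z\<close> by simp
  ultimately show ?case using Z0' \<xi>(1,2) unfolding a_def
    by (intro exI[of _ "insert \<xi> Z0'"]) auto
qed

lemma abs_le_of_card_zeros_nth_deriv:
  fixes \<phi> :: "nat \<Rightarrow> real \<Rightarrow> real"
  assumes der: "\<And>k t. (\<phi> k has_real_derivative \<phi> (Suc k) t) (at t)"
    and "finite Z" "card Z = Suc N" "Z \<subseteq> {a..b}" "\<forall>z\<in>Z. \<phi> 0 z = 0"
    and "\<forall>t\<in>{a..b}. \<bar>\<phi> N t\<bar> \<le> M" "t \<in> {a..b}"
  shows "\<bar>\<phi> 0 t\<bar> \<le> M * (b - a) ^ N"
  using assms
proof (induction N arbitrary: \<phi> Z t)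
  case 0
  then show ?case by simp
next
  case (Suc N)
  note der = Suc.prems(1)
  have "Z \<noteq> {}" using Suc.prems by auto
  obtain Z' where Z': "finite Z'" "card Z' = Suc N" "Z' \<subseteq> {Min Z..Max Z}" "\<forall>z\<in>Z'. \<phi> 1 z = 0"
    using Rolle_card_zeros[of "\<phi> 0" "\<phi> 1" Z "Suc N"] der Suc.prems(2-5) by auto
  moreover have "{Min Z..Max Z} \<subseteq> {a..b}" using Suc.prems(2,4) \<open>Z \<noteq> {}\<close> by auto
  ultimately have "Z' \<subseteq> {a..b}" by blast
  with Z' have deriv_bound: "\<bar>\<phi> 1 s\<bar> \<le> M * (b - a) ^ N" if "s \<in> {a..b}" for s
    using Suc.IH[of "\<lambda>k. \<phi> (Suc k)" Z' s] der Suc.prems(6) that by auto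
  obtain z where z: "z \<in> Z" using \<open>Z \<noteq> {}\<close> by auto
  with Suc.prems(4) have "z \<in> {a..b}" by blast
  have "norm (\<phi> 0 t - \<phi> 0 z) \<le> M * (b - a) ^ N * norm (t - z)"
    by (rule field_differentiable_bound[of "{a..b}" _ "\<phi> 1"])
      (use der deriv_bound Suc.prems(7) \<open>z \<in> {a..b}\<close> in \<open>auto intro: has_field_derivative_at_within\<close>)
  then have "\<bar>\<phi> 0 t - \<phi> 0 z\<bar> \<le> M * (b - a) ^ N * \<bar>t - z\<bar>" by simp
  also have "\<dots> \<le> M * (b - a) ^ N * (b - a)"
    using Suc.prems(7) \<open>z \<in> {a..b}\<close> deriv_bound[of t] by (intro mult_left_mono) auto
  finally show ?case using Suc.prems(5) z by (simp add: algebra_simps)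
qed

lemma abs_deriv_le_values_and_second_deriv:
  fixes \<phi> \<phi>' \<phi>'' :: "real \<Rightarrow> real"
  assumes "h > 0"
    and der: "\<And>t. t \<in> {0..h} \<Longrightarrow> (\<phi> has_real_derivative \<phi>' t) (at t)"
    and der2: "\<And>t. t \<in> {0..h} \<Longrightarrow> (\<phi>' has_real_derivative \<phi>'' t) (at t)"
    and bound: "\<And>t. t \<in> {0..h} \<Longrightarrow> \<bar>\<phi>'' t\<bar> \<le> M"
  shows "\<bar>\<phi>' 0\<bar> \<le> (\<bar>\<phi> h\<bar> + \<bar>\<phi> 0\<bar>) / h + M * h"
proof -
  obtain s where s: "0 < s" "s < h" "\<phi> h - \<phi> 0 = h * \<phi>' s"
    using MVT2[OF \<open>h > 0\<close>, of \<phi> \<phi>'] der by auto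
  have "norm (\<phi>' s - \<phi>' 0) \<le> M * norm (s - 0)"
    by (rule field_differentiable_bound[of "{0..h}" _ "\<phi>''"])
      (use der2 bound s in \<open>auto intro: has_field_derivative_at_within\<close>)
  moreover have "M * s \<le> M * h"
    using s bound[of 0] by (intro mult_left_mono) auto
  ultimately have "\<bar>\<phi>' 0\<bar> \<le> \<bar>\<phi>' s\<bar> + M * h"
    using s by simp
  also have "\<bar>\<phi>' s\<bar> = \<bar>\<phi> h - \<phi> 0\<bar> / h"
    using s(3) \<open>h > 0\<close> by (simp add: abs_mult)
  also have "\<dots> \<le> (\<bar>\<phi> h\<bar> + \<bar>\<phi> 0\<bar>) / h"
    using \<open>h > 0\<close> by (intro divide_right_mono) auto
  finally show ?thesis by simp
qed

lemma abs_le_on_open_subset_closure: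
  fixes g B :: "'a::topological_space \<Rightarrow> real"
  assumes "continuous_on UNIV g" "continuous_on UNIV B" "open U" "U \<subseteq> closure S"
    and bound: "\<And>q. q \<in> U \<inter> S \<Longrightarrow> \<bar>g q\<bar> \<le> B q" and "p \<in> U"
  shows "\<bar>g p\<bar> \<le> B p"
proof -
  have "closed {q. \<bar>g q\<bar> \<le> B q}"
    by (intro closed_Collect_le continuous_on_rabs assms(1,2))
  then have "closure (U \<inter> S) \<subseteq> {q. \<bar>g q\<bar> \<le> B q}"
    using bound by (intro closure_minimal) auto
  moreover have "p \<in> closure (U \<inter> S)"
    using open_Int_closure_subset[OF \<open>open U\<close>] assms(4,6) by blast
  ultimately show ?thesis by blast
qed

lemma closure_off_horizontal_axis: "closure {q :: real \<times> real. snd q \<noteq> 0} = UNIV"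
proof -
  have "{q :: real \<times> real. snd q \<noteq> 0} = UNIV \<times> - {0}" by auto
  then show ?thesis by (simp add: closure_Times closure_complement)
qed

definition vanishes_to_infinite_order_at_0 :: "('a::real_normed_vector \<Rightarrow> real) \<Rightarrow> bool" where
  "vanishes_to_infinite_order_at_0 g \<longleftrightarrow>
     (\<forall>m. \<exists>\<delta>>0. \<exists>C\<ge>0. \<forall>p. norm p < \<delta> \<longrightarrow> \<bar>g p\<bar> \<le> C * norm p ^ m)"

lemma vanishes_to_infinite_order_at_0_imp_zero:
  assumes "vanishes_to_infinite_order_at_0 g"
  shows "g 0 = 0"
proof -
  obtain \<delta> C where "\<delta> > 0" and bound: "\<forall>p. norm p < \<delta> \<longrightarrow> \<bar>g p\<bar> \<le> C * norm p ^ 1"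
    using assms unfolding vanishes_to_infinite_order_at_0_def by blast
  then show ?thesis using bound[rule_format, of 0] by simp
qed

lemma no_lojasiewicz_inequality_if_vanishes_to_infinite_order_at_0:
  fixes g :: "'a::real_normed_vector \<Rightarrow> real" and S :: "'a set"
  assumes vanish: "vanishes_to_infinite_order_at_0 g" and "c > 0"
    and far: "\<And>\<epsilon>. \<epsilon> > 0 \<Longrightarrow> \<exists>p. p \<noteq> 0 \<and> norm p < \<epsilon> \<and> norm p powr e \<le> c * infdist p S"
  shows "\<not> (\<exists>C>0. \<exists>\<theta>>0. \<exists>U. open U \<and> (0::'a) \<in> U \<and> (\<forall>p\<in>U. \<bar>g p\<bar> \<ge> C * infdist p S powr \<theta>))"
proof
  assume "\<exists>C>0. \<exists>\<theta>>0. \<exists>U. open U \<and> (0::'a) \<in> U \<and> (\<forall>p\<in>U. \<bar>g p\<bar> \<ge> C * infdist p S powr \<theta>)"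
  then obtain C \<theta> U where "C > 0" "\<theta> > 0" "open U" "0 \<in> U"
    and loj: "\<forall>p\<in>U. C * infdist p S powr \<theta> \<le> \<bar>g p\<bar>" by blast
  obtain \<epsilon> where "\<epsilon> > 0" "ball 0 \<epsilon> \<subseteq> U" using \<open>open U\<close> \<open>0 \<in> U\<close> open_contains_ball by blast
  obtain N :: nat where "e * \<theta> < real N" using reals_Archimedean2 by blast
  obtain \<delta> K where "\<delta> > 0" and bound: "\<forall>p. norm p < \<delta> \<longrightarrow> \<bar>g p\<bar> \<le> K * norm p ^ N"
    using vanish unfolding vanishes_to_infinite_order_at_0_def by blast
  define a where "a = real N - e * \<theta>"
  define L where "L = C / c powr \<theta>"
  have "a > 0" "L > 0" using \<open>e * \<theta> < real N\<close> \<open>C > 0\<close> \<open>c > 0\<close> unfolding a_def L_def by auto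
  have "((\<lambda>x. K * x powr a) \<longlongrightarrow> 0) (at_right 0)"
    by (intro tendsto_mult_right_zero tendsto_zero_powrI[OF _ tendsto_const _ \<open>a > 0\<close>])
      (auto simp: eventually_at_right_less eventually_mono[OF eventually_at_right_less])
  from order_tendstoD(2)[OF this \<open>L > 0\<close>] obtain \<eta> where "\<eta> > 0"
    and small: "\<And>x. 0 < x \<Longrightarrow> x < \<eta> \<Longrightarrow> K * x powr a < L"
    unfolding eventually_at_right_field by auto
  obtain p where "p \<noteq> 0" "norm p < min \<epsilon> (min \<delta> \<eta>)" and p_far: "norm p powr e \<le> c * infdist p S"
    using far[of "min \<epsilon> (min \<delta> \<eta>)"] \<open>\<epsilon> > 0\<close> \<open>\<delta> > 0\<close> \<open>\<eta> > 0\<close> by auto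
  define x where "x = norm p"
  have "x > 0" using \<open>p \<noteq> 0\<close> unfolding x_def by simp
  have "L * x powr (e * \<theta>) = C * (x powr e / c) powr \<theta>"
    unfolding L_def by (simp add: powr_divide powr_powr)
  also have "\<dots> \<le> C * infdist p S powr \<theta>"
    using p_far \<open>c > 0\<close> \<open>\<theta> > 0\<close> \<open>C > 0\<close> unfolding x_def
    by (intro mult_left_mono powr_mono2) (auto simp: field_simps)
  also have "\<dots> \<le> \<bar>g p\<bar>"
    using loj \<open>ball 0 \<epsilon> \<subseteq> U\<close> \<open>norm p < min \<epsilon> (min \<delta> \<eta>)\<close> by auto
  also have "\<dots> \<le> K * x ^ N"
    using bound \<open>norm p < min \<epsilon> (min \<delta> \<eta>)\<close> unfolding x_def by auto
  also have "\<dots> = K * x powr a * x powr (e * \<theta>)"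
    using \<open>x > 0\<close> unfolding a_def by (simp add: powr_realpow flip: powr_add)
  also have "\<dots> < L * x powr (e * \<theta>)"
    using small[OF \<open>x > 0\<close>] \<open>norm p < min \<epsilon> (min \<delta> \<eta>)\<close> \<open>x > 0\<close> unfolding x_def by simp
  finally show False by simp
qed

lemma continuous_on_iter_partial:
  assumes "smooth_R2 f" "set vs \<subseteq> Basis"
  shows "continuous_on S (iter_partial vs f)"
  using assms continuous_on_subset[OF _ subset_UNIV] unfolding smooth_R2_def by blast

lemma has_real_derivative_iter_partial_line:
  assumes "smooth_R2 f" "set vs \<subseteq> Basis" "v \<in> Basis"
  shows "((\<lambda>t. iter_partial vs f (x + t *\<^sub>R v)) has_real_derivative
           iter_partial (v # vs) f (x + t *\<^sub>R v)) (at t)"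
proof -
  let ?g = "iter_partial vs f"
  have "(\<lambda>s. ?g ((x + t *\<^sub>R v) + s *\<^sub>R v)) differentiable (at 0)"
    using assms unfolding smooth_R2_def by blast
  then have "((\<lambda>s. ?g ((x + t *\<^sub>R v) + s *\<^sub>R v)) has_real_derivative
      partial_dir v ?g (x + t *\<^sub>R v)) (at 0)"
    unfolding partial_dir_def by (simp add: DERIV_deriv_iff_real_differentiable)
  then have "((\<lambda>s. ?g (x + (s + t) *\<^sub>R v)) has_real_derivative
      partial_dir v ?g (x + t *\<^sub>R v)) (at 0)"
    by (simp add: algebra_simps)
  then show ?thesis
    using DERIV_shift[where f="\<lambda>t. ?g (x + t *\<^sub>R v)" and x=0 and z=t] by simp
qed

lemma abs_partial_le_of_vanishing_order:
  assumes sm: "smooth_R2 f" and vs: "set vs \<subseteq> Basis" and v: "v \<in> Basis" and "n \<ge> 1"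
    and g_bound: "\<forall>q. norm q < \<delta> \<longrightarrow> \<bar>iter_partial vs f q\<bar> \<le> C * norm q ^ (2 * n)"
    and g''_bound: "\<forall>q\<in>cball 0 1. \<bar>iter_partial (v # v # vs) f q\<bar> \<le> M"
    and "C \<ge> 0" "p \<noteq> 0" "2 * norm p < \<delta>" "norm p \<le> 1 / 2"
  shows "\<bar>iter_partial (v # vs) f p\<bar> \<le> (C * 4 ^ n + C + M) * norm p ^ n"
proof -
  define g where "g = iter_partial vs f"
  define g' where "g' = iter_partial (v # vs) f"
  define g'' where "g'' = iter_partial (v # v # vs) f"
  define r where "r = norm p"
  have r: "0 < r" "2 * r < \<delta>" "r \<le> 1 / 2" using assms(8-) unfolding r_def by auto
  define h where "h = r ^ n"
  have h: "0 < h" "h \<le> r"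
    using r \<open>n \<ge> 1\<close> unfolding h_def by (simp_all add: power_le_one_iff power_decreasing[of 1 n r, simplified])
  have h_sq: "r ^ n * h = r ^ (2 * n)"
    unfolding h_def by (metis mult_2 power_add)
  have norm_line: "norm (p + t *\<^sub>R v) \<le> 2 * r" if "t \<in> {0..h}" for t
    using norm_triangle_ineq[of p "t *\<^sub>R v"] that h v unfolding r_def by (auto simp: norm_Basis)
  have vs': "set (v # vs) \<subseteq> Basis" using vs v by auto
  have deriv: "((\<lambda>t. g (p + t *\<^sub>R v)) has_real_derivative g' (p + t *\<^sub>R v)) (at t)" for t
    unfolding g_def g'_def by (rule has_real_derivative_iter_partial_line[OF sm vs v])
  have deriv': "((\<lambda>t. g' (p + t *\<^sub>R v)) has_real_derivative g'' (p + t *\<^sub>R v)) (at t)" for t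
    unfolding g'_def g''_def by (rule has_real_derivative_iter_partial_line[OF sm vs' v])
  have bound'': "\<bar>g'' (p + t *\<^sub>R v)\<bar> \<le> M" if "t \<in> {0..h}" for t
    using g''_bound norm_line[OF that] r(3) unfolding g''_def by simp
  have step: "\<bar>g' p\<bar> \<le> (\<bar>g (p + h *\<^sub>R v)\<bar> + \<bar>g p\<bar>) / h + M * h"
    using abs_deriv_le_values_and_second_deriv[OF \<open>h > 0\<close>, of "\<lambda>t. g (p + t *\<^sub>R v)"
        "\<lambda>t. g' (p + t *\<^sub>R v)" "\<lambda>t. g'' (p + t *\<^sub>R v)" M] deriv deriv' bound''
    by simp
  have far: "\<bar>g (p + h *\<^sub>R v)\<bar> \<le> C * 4 ^ n * (r ^ n * h)"
  proof -
    have "norm (p + h *\<^sub>R v) < \<delta>" using norm_line[of h] h r by auto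
    then have "\<bar>g (p + h *\<^sub>R v)\<bar> \<le> C * norm (p + h *\<^sub>R v) ^ (2 * n)"
      using g_bound unfolding g_def by blast
    also have "\<dots> \<le> C * (2 * r) ^ (2 * n)"
      using norm_line[of h] h \<open>C \<ge> 0\<close> by (intro mult_left_mono power_mono) auto
    also have "\<dots> = C * 4 ^ n * (r ^ n * h)"
      unfolding h_sq by (simp add: power_mult power_mult_distrib)
    finally show ?thesis .
  qed
  have "norm p < \<delta>" using r unfolding r_def by linarith
  then have "\<bar>g p\<bar> \<le> C * r ^ (2 * n)" using g_bound unfolding g_def r_def by blast
  then have near: "\<bar>g p\<bar> \<le> C * (r ^ n * h)" by (simp only: h_sq)
  have "(\<bar>g (p + h *\<^sub>R v)\<bar> + \<bar>g p\<bar>) / h \<le> (C * 4 ^ n * (r ^ n * h) + C * (r ^ n * h)) / h"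
    using far near \<open>h > 0\<close> by (intro divide_right_mono) auto
  with step have "\<bar>g' p\<bar> \<le> (C * 4 ^ n * (r ^ n * h) + C * (r ^ n * h)) / h + M * h"
    by linarith
  also have "\<dots> = (C * 4 ^ n + C) * r ^ n + M * h"
    using \<open>h > 0\<close> by (simp add: field_simps)
  also have "\<dots> = (C * 4 ^ n + C + M) * r ^ n"
    unfolding h_def by (simp add: algebra_simps)
  finally show ?thesis unfolding g'_def r_def .
qed

lemma vanishes_to_infinite_order_at_0_partial:
  assumes sm: "smooth_R2 f" and vs: "set vs \<subseteq> Basis" and v: "v \<in> Basis"
    and vanish: "vanishes_to_infinite_order_at_0 (iter_partial vs f)"
  shows "vanishes_to_infinite_order_at_0 (iter_partial (v # vs) f)"
  unfolding vanishes_to_infinite_order_at_0_def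
proof
  fix m :: nat
  obtain \<delta> C where "\<delta> > 0" "C \<ge> 0"
    and g_bound: "\<forall>q. norm q < \<delta> \<longrightarrow> \<bar>iter_partial vs f q\<bar> \<le> C * norm q ^ (2 * Suc m)"
    using vanish unfolding vanishes_to_infinite_order_at_0_def by blast
  have "set (v # v # vs) \<subseteq> Basis" using vs v by auto
  then have "continuous_on (cball 0 1) (iter_partial (v # v # vs) f)"
    by (rule continuous_on_iter_partial[OF sm])
  then obtain M where "M \<ge> 0" and M: "\<And>q. q \<in> cball 0 1 \<Longrightarrow> norm (iter_partial (v # v # vs) f q) \<le> M"
    using continuous_on_compact_bound[OF compact_cball] by blast
  then have g''_bound: "\<forall>q\<in>cball 0 1. \<bar>iter_partial (v # v # vs) f q\<bar> \<le> M" by simp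
  define d where "d = min (\<delta> / 2) (1 / 2)"
  define K where "K = C * 4 ^ Suc m + C + M"
  have off_0: "\<bar>iter_partial (v # vs) f p\<bar> \<le> K * norm p ^ m" if "p \<noteq> 0" "norm p < d" for p
  proof -
    have "\<bar>iter_partial (v # vs) f p\<bar> \<le> K * norm p ^ Suc m"
      using abs_partial_le_of_vanishing_order[OF sm vs v _ g_bound g''_bound \<open>C \<ge> 0\<close> \<open>p \<noteq> 0\<close>] that
      unfolding K_def d_def by auto
    also have "\<dots> \<le> K * norm p ^ m"
      using that \<open>C \<ge> 0\<close> \<open>M \<ge> 0\<close> unfolding K_def d_def
      by (intro mult_left_mono power_decreasing) auto
    finally show ?thesis .
  qed
  have "continuous_on UNIV (iter_partial (v # vs) f)"
    using vs v by (intro continuous_on_iter_partial[OF sm]) auto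
  then have "\<bar>iter_partial (v # vs) f p\<bar> \<le> K * norm p ^ m" if "norm p < d" for p
    by (rule abs_le_on_open_subset_closure[of _ _ "ball 0 d" "- {0}"])
      (use off_0 that in \<open>auto intro!: continuous_intros simp: closure_complement\<close>)
  moreover have "d > 0" "K \<ge> 0" using \<open>\<delta> > 0\<close> \<open>C \<ge> 0\<close> \<open>M \<ge> 0\<close> unfolding d_def K_def by auto
  ultimately show "\<exists>\<delta>>0. \<exists>C\<ge>0. \<forall>p. norm p < \<delta> \<longrightarrow> \<bar>iter_partial (v # vs) f p\<bar> \<le> C * norm p ^ m"
    by blast
qed

lemma mem_hawaiian_earring_iff:
  "(x, y) \<in> hawaiian_earring \<longleftrightarrow> (\<exists>k::nat \<ge> 1. x\<^sup>2 + y\<^sup>2 = 2 * x / real k)"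
proof -
  have "(x - 1 / real k)\<^sup>2 + y\<^sup>2 = 1 / (real k)\<^sup>2 \<longleftrightarrow> x\<^sup>2 + y\<^sup>2 = 2 * x / real k" for k :: nat
    by (auto simp: power2_diff power_divide)
  then show ?thesis unfolding hawaiian_earring_def by auto
qed

lemma hawaiian_earring_eq_spheres:
  "hawaiian_earring = (\<Union>k\<in>{1::nat..}. sphere (1 / real k, 0) (1 / real k))"
proof -
  have circle: "(x - u)\<^sup>2 + y\<^sup>2 = u\<^sup>2 \<longleftrightarrow> dist (u, 0) (x, y) = u" if "u > 0" for u x y :: real
  proof -
    have "dist (u, 0) (x, y) = sqrt ((x - u)\<^sup>2 + y\<^sup>2)"
      by (simp add: dist_Pair_Pair dist_real_def power2_commute)
    moreover have "sqrt (u\<^sup>2) = u" using that by simp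
    ultimately show ?thesis by (metis real_sqrt_eq_iff)
  qed
  have "{(x, y). (x - 1 / real k)\<^sup>2 + y\<^sup>2 = 1 / (real k)\<^sup>2} = sphere (1 / real k, 0) (1 / real k)"
    if "k \<ge> 1" for k :: nat
    using that circle[of "1 / real k"] by (auto simp: power_divide)
  then show ?thesis unfolding hawaiian_earring_def by (intro SUP_cong) auto
qed

lemma hawaiian_earring_horizontal_section:
  assumes "c \<noteq> 0" "\<bar>c\<bar> < 1 / real (Suc N)"
  obtains Z where "finite Z" "card Z = Suc N" "Z \<subseteq> {0..\<bar>c\<bar>}"
    "\<And>x. x \<in> Z \<Longrightarrow> (x, c) \<in> hawaiian_earring"
proof -
  define x where "x k = (1 - sqrt (1 - (real k * c)\<^sup>2)) / real k" for k :: nat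
  have x: "(x k)\<^sup>2 + c\<^sup>2 = 2 * x k / real k" "0 \<le> x k" "x k \<le> \<bar>c\<bar>" if "k \<in> {1..Suc N}" for k
  proof -
    have "real k > 0" using that by simp
    have "real k * \<bar>c\<bar> \<le> real (Suc N) * \<bar>c\<bar>" using that by (intro mult_right_mono) auto
    also have "\<dots> < 1" using assms(2) by (simp add: field_simps)
    finally have kc: "real k * \<bar>c\<bar> < 1" .
    then have "(real k * c)\<^sup>2 < 1" by (simp add: abs_square_less_1 abs_mult)
    define s where "s = sqrt (1 - (real k * c)\<^sup>2)"
    have s: "0 \<le> s" "s \<le> 1" "s\<^sup>2 = 1 - (real k * c)\<^sup>2"
      using \<open>(real k * c)\<^sup>2 < 1\<close> unfolding s_def by auto
    have x_eq: "x k = (1 - s) / real k" unfolding x_def s_def ..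
    show "(x k)\<^sup>2 + c\<^sup>2 = 2 * x k / real k"
      using s(3) \<open>real k > 0\<close> unfolding x_eq by (simp add: field_simps power2_eq_square)
    show "0 \<le> x k" unfolding x_eq using s \<open>real k > 0\<close> by simp
    have "1 - s \<le> (real k * c)\<^sup>2"
      using s mult_left_le[of s s] by (simp add: power2_eq_square)
    then have "x k \<le> (real k * c)\<^sup>2 / real k"
      unfolding x_eq using \<open>real k > 0\<close> by (intro divide_right_mono) auto
    also have "\<dots> = \<bar>c\<bar> * (real k * \<bar>c\<bar>)" using \<open>real k > 0\<close> by (simp add: power2_eq_square)
    also have "\<dots> \<le> \<bar>c\<bar>" using kc by (simp add: mult_left_le)
    finally show "x k \<le> \<bar>c\<bar>" .
  qed
  have "inj_on x {1..Suc N}"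
  proof (rule inj_onI)
    fix j k assume j: "j \<in> {1..Suc N}" and k: "k \<in> {1..Suc N}" and "x j = x k"
    then have "2 * x j / real j = 2 * x j / real k" using x(1)[OF j] x(1)[OF k] by metis
    moreover have "x j \<noteq> 0" using x(1)[OF j] \<open>c \<noteq> 0\<close> by auto
    ultimately show "j = k" by simp
  qed
  then show thesis
    using x by (intro that[of "x ` {1..Suc N}"]) (auto simp: card_image mem_hawaiian_earring_iff)
qed

lemma abs_le_off_axis_if_zero_on_hawaiian_earring:
  assumes sm: "smooth_R2 f" and zero: "\<And>q. q \<in> hawaiian_earring \<Longrightarrow> f q = 0"
    and M: "\<forall>q\<in>cball 0 2. \<bar>iter_partial (replicate N (1, 0)) f q\<bar> \<le> M"
    and "norm p < 1 / real (Suc N)" "snd p \<noteq> 0"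
  shows "\<bar>f p\<bar> \<le> M * 2 ^ N * norm p ^ N"
proof -
  have "(1, 0) \<in> (Basis :: (real \<times> real) set)" by (simp add: Basis_prod_def)
  then have e1s: "set (replicate k (1, 0)) \<subseteq> (Basis :: (real \<times> real) set)" for k by auto
  obtain x c where p: "p = (x, c)" by fastforce
  define \<phi> where "\<phi> k t = iter_partial (replicate k (1, 0)) f (t, c)" for k t
  have der: "(\<phi> k has_real_derivative \<phi> (Suc k) t) (at t)" for k t
    using has_real_derivative_iter_partial_line[OF sm e1s[of k] \<open>(1, 0) \<in> Basis\<close>, of "(0, c)" t]
    unfolding \<phi>_def by simp
  define r where "r = norm p"
  have xc: "\<bar>x\<bar> \<le> r" "\<bar>c\<bar> \<le> r"
    unfolding r_def p using norm_fst_le[of x c] norm_snd_le[of c x] by simp_all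
  have "1 / real (Suc N) \<le> 1" by simp
  then have "r < 1" using assms(4) unfolding r_def by linarith
  have c: "c \<noteq> 0" "\<bar>c\<bar> < 1 / real (Suc N)"
    using assms(4,5) xc(2) unfolding p r_def by auto
  obtain Z where Z: "finite Z" "card Z = Suc N" "Z \<subseteq> {0..\<bar>c\<bar>}"
    "\<And>x. x \<in> Z \<Longrightarrow> (x, c) \<in> hawaiian_earring"
    using hawaiian_earring_horizontal_section[OF c] by blast
  have "\<forall>t\<in>{-r..r}. \<bar>\<phi> N t\<bar> \<le> M"
  proof
    fix t :: real assume "t \<in> {-r..r}"
    have "norm (t, c) \<le> \<bar>t\<bar> + \<bar>c\<bar>" using norm_Pair_le[of t c] by simp
    then have "(t, c) \<in> cball 0 2" using \<open>t \<in> {-r..r}\<close> xc \<open>r < 1\<close> by auto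
    then show "\<bar>\<phi> N t\<bar> \<le> M" using M unfolding \<phi>_def by auto
  qed
  moreover have "Z \<subseteq> {-r..r}" using Z(3) xc by auto
  moreover have "\<forall>z\<in>Z. \<phi> 0 z = 0" using Z(4) zero unfolding \<phi>_def by simp
  moreover have "x \<in> {-r..r}" using xc by auto
  ultimately have "\<bar>\<phi> 0 x\<bar> \<le> M * (r - - r) ^ N"
    using abs_le_of_card_zeros_nth_deriv[of \<phi>, OF der Z(1,2)] by blast
  then show ?thesis unfolding \<phi>_def p r_def by (simp add: power_mult_distrib)
qed

lemma vanishes_to_infinite_order_at_0_if_zero_on_hawaiian_earring:
  assumes sm: "smooth_R2 f" and zero: "\<And>q. q \<in> hawaiian_earring \<Longrightarrow> f q = 0"
  shows "vanishes_to_infinite_order_at_0 f"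
  unfolding vanishes_to_infinite_order_at_0_def
proof
  fix N :: nat
  have "set (replicate N (1, 0)) \<subseteq> (Basis :: (real \<times> real) set)" by (auto simp: Basis_prod_def)
  then have "continuous_on (cball 0 2) (iter_partial (replicate N (1, 0)) f)"
    by (rule continuous_on_iter_partial[OF sm])
  then obtain M where "M \<ge> 0"
    and M: "\<And>q. q \<in> cball 0 2 \<Longrightarrow> norm (iter_partial (replicate N (1, 0)) f q) \<le> M"
    using continuous_on_compact_bound[OF compact_cball] by blast
  then have M': "\<forall>q\<in>cball 0 2. \<bar>iter_partial (replicate N (1, 0)) f q\<bar> \<le> M" by simp
  define \<delta> where "\<delta> = 1 / real (Suc N)"
  have "continuous_on UNIV f" using continuous_on_iter_partial[OF sm, of "[]"] by simp
  then have "\<bar>f p\<bar> \<le> M * 2 ^ N * norm p ^ N" if "norm p < \<delta>" for p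
    by (rule abs_le_on_open_subset_closure[of _ _ "ball 0 \<delta>" "{q. snd q \<noteq> 0}"])
      (use abs_le_off_axis_if_zero_on_hawaiian_earring[OF sm zero M'] that in
        \<open>auto intro!: continuous_intros simp: closure_off_horizontal_axis \<delta>_def\<close>)
  moreover have "\<delta> > 0" "M * 2 ^ N \<ge> 0" using \<open>M \<ge> 0\<close> unfolding \<delta>_def by auto
  ultimately show "\<exists>\<delta>>0. \<exists>C\<ge>0. \<forall>p. norm p < \<delta> \<longrightarrow> \<bar>f p\<bar> \<le> C * norm p ^ N"
    by blast
qed

lemma infdist_hawaiian_earring_between_circles:
  assumes "k \<ge> 1"
  shows "1 / real k - 1 / (real k + 1) \<le> infdist (1 / real k + 1 / (real k + 1), 0) hawaiian_earring"
proof -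
  define A B where "A = 1 / real k" and "B = 1 / (real k + 1)"
  have AB: "0 < B" "B \<le> A" using assms unfolding A_def B_def by (simp_all add: frac_le)
  define p :: "real \<times> real" where "p = (A + B, 0)"
  have "A - B \<le> dist p q" if qH: "q \<in> hawaiian_earring" for q
  proof -
    obtain j :: nat where "j \<ge> 1" and q: "dist (1 / real j, 0) q = 1 / real j"
      using qH unfolding hawaiian_earring_eq_spheres by auto
    define u where "u = 1 / real j"
    have "u \<ge> A \<or> u \<le> B"
      using \<open>j \<ge> 1\<close> assms unfolding u_def A_def B_def by (cases "j \<le> k") (simp_all add: frac_le)
    moreover have "\<bar>\<bar>A + B - u\<bar> - u\<bar> \<le> dist p q"
      using abs_dist_diff_le[of p "(u, 0)" q] q unfolding p_def u_def
      by (simp add: dist_Pair_Pair dist_real_def)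
    ultimately show ?thesis using AB by (auto simp: abs_if split: if_splits)
  qed
  moreover have "hawaiian_earring \<noteq> {}"
    using mem_hawaiian_earring_iff[of 0 0] by auto
  ultimately have "A - B \<le> infdist p hawaiian_earring"
    unfolding infdist_notempty[OF \<open>hawaiian_earring \<noteq> {}\<close>] by (intro cINF_greatest) auto
  then show ?thesis unfolding p_def A_def B_def .
qed

lemma hawaiian_earring_far_points:
  assumes "\<epsilon> > 0"
  obtains p :: "real \<times> real" where "p \<noteq> 0" "norm p < \<epsilon>" "norm p powr 2 \<le> 8 * infdist p hawaiian_earring"
proof -
  obtain k :: nat where k: "2 / \<epsilon> < real k" using reals_Archimedean2 by blast
  then have "k \<ge> 1" using assms by (cases k) (auto simp: field_simps)
  define x where "x = 1 / real k + 1 / (real k + 1)"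
  have "0 < 1 / (real k + 1)" "1 / (real k + 1) \<le> 1 / real k"
    using \<open>k \<ge> 1\<close> by (simp_all add: frac_le)
  then have "0 < x" "x \<le> 2 / real k" unfolding x_def by (linarith, simp add: divide_inverse)
  moreover have "2 / real k < \<epsilon>" using k assms \<open>k \<ge> 1\<close> by (simp add: field_simps)
  ultimately have "x < \<epsilon>" by linarith
  have "x\<^sup>2 \<le> (2 / real k)\<^sup>2" using \<open>0 < x\<close> \<open>x \<le> 2 / real k\<close> by (intro power_mono) auto
  also have "\<dots> = 8 / (2 * real k * real k)" by (simp add: power2_eq_square)
  also have "\<dots> \<le> 8 / (real k * (real k + 1))"
    using \<open>k \<ge> 1\<close> by (intro frac_le) (auto simp: algebra_simps add_pos_nonneg)
  also have "\<dots> = 8 * (1 / real k - 1 / (real k + 1))"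
    using \<open>k \<ge> 1\<close> by (simp add: field_simps)
  also have "\<dots> \<le> 8 * infdist (x, 0) hawaiian_earring"
    using infdist_hawaiian_earring_between_circles[OF \<open>k \<ge> 1\<close>] unfolding x_def by simp
  finally show thesis
    using \<open>0 < x\<close> \<open>x < \<epsilon>\<close> by (intro that[of "(x, 0)"]) (auto simp: norm_Pair powr_numeral zero_prod_def)
qed

theorem theorem5:
  fixes f :: "real \<times> real \<Rightarrow> real"
  assumes "smooth_R2 f"
    and "{p. f p = 0} = hawaiian_earring"
  shows "flat_at f 0 \<and>
    \<not> (\<exists>C>0. \<exists>\<theta>>0. \<exists>U. open U \<and> (0::real \<times> real) \<in> U \<and>
          (\<forall>p\<in>U. \<bar>f p\<bar> \<ge> C * infdist p hawaiian_earring powr \<theta>))"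
proof
  have vanish: "vanishes_to_infinite_order_at_0 (iter_partial vs f)" if "set vs \<subseteq> Basis" for vs
    using that
  proof (induction vs)
    case Nil
    show ?case
      using vanishes_to_infinite_order_at_0_if_zero_on_hawaiian_earring[OF assms(1)] assms(2) by auto
  next
    case (Cons v vs)
    then show ?case using vanishes_to_infinite_order_at_0_partial[OF assms(1)] by simp
  qed
  then show "flat_at f 0"
    unfolding flat_at_def using vanishes_to_infinite_order_at_0_imp_zero by blast
  have far: "\<exists>p. p \<noteq> 0 \<and> norm p < \<epsilon> \<and> norm p powr 2 \<le> 8 * infdist p hawaiian_earring"
    if "\<epsilon> > 0" for \<epsilon>
    using hawaiian_earring_far_points[OF that] by blast
  show "\<not> (\<exists>C>0. \<exists>\<theta>>0. \<exists>U. open U \<and> (0::real \<times> real) \<in> U \<and>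
          (\<forall>p\<in>U. \<bar>f p\<bar> \<ge> C * infdist p hawaiian_earring powr \<theta>))"
    using no_lojasiewicz_inequality_if_vanishes_to_infinite_order_at_0[of f 8, OF _ _ far]
      vanish[of "[]"] by simp
qed

end
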